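(* Let $n=2^m\geq 8$. If $B\subseteq X^n$ is a set in which any two words are at Hamming distance at most $4$, then $|B|\leq n^2$. Moreover, there exists a set $B\subseteq X^n$ of diameter $4$ with $|B|=n^2$.
   Context: $X^n$ is the set of words of length $n$ over the alphabet $\{*,0,1\}$ containing exactly one symbol $*$. The Hamming distance between two words is the number of coordinates in which they differ; the diameter of a set is the maximum distance between two of its elements. *)

theory Defs
  imports Main
begin

datatype sym = Star | Zero | One

definition X :: "nat \<Rightarrow> sym list set" where
  "X n = {w. length w = n \<and> card {i. i < n \<and> w ! i = Star} = 1}"

definition hamming :: "sym list \<Rightarrow> sym list \<Rightarrow> nat" where
  "hamming u v = card {i. i < length u \<and> u ! i \<noteq> v ! i}"

definition diam :: "sym list set \<Rightarrow> nat" where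
  "diam B = Max {hamming u v | u v. u \<in> B \<and> v \<in> B}"

end

theory Submission
  imports Defs "HOL-Combinatorics.Permutations"
begin

text \<open>
  A down-shift (turning a one into a zero unless the result is already present) preserves
  both the size of an anticode and the bound 4 on its diameter, so the anticode may be
  assumed down-closed.  If it contains a word with three ones, that word's star and three
  of its ones confine every other word to at most 8n possibilities, and 8n \<le> n^2 for
  n \<ge> 8.  Otherwise all words have at most two ones: at most n have none, and the others
  are bounded by averaging over all n! permutations of the positions.  A fixed configuration of n/2 words
  at pairwise distance at least 5 meets the anticode in at most one word after any
  permutation, while every word with one or two ones lies in (n - 2)! permuted copies of
  it; hence there are at most n (n - 1) such words.  The n^2 words with at most one one
  form an anticode of diameter exactly 4.
\<close>

section \<open>Words with a single star\<close>

definition word :: "nat \<Rightarrow> nat \<Rightarrow> nat set \<Rightarrow> sym list" where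
  "word n c Z = map (\<lambda>i. if i = c then Star else if i \<in> Z then One else Zero) [0..<n]"

definition ones :: "sym list \<Rightarrow> nat set" where
  "ones w = {i. i < length w \<and> w ! i = One}"

lemma length_word [simp]: "length (word n c Z) = n"
  by (simp add: word_def)

lemma nth_word: "i < n \<Longrightarrow> word n c Z ! i = (if i = c then Star else if i \<in> Z then One else Zero)"
  by (simp add: word_def)

lemma finite_ones [simp]: "finite (ones w)"
  by (simp add: ones_def)

lemma word_in_X: "c < n \<Longrightarrow> word n c Z \<in> X n"
proof -
  assume "c < n"
  then have "{i. i < n \<and> word n c Z ! i = Star} = {c}"
    by (auto simp: nth_word split: if_splits)
  then show ?thesis by (simp add: X_def)
qed

lemma X_obtain_word:
  assumes "w \<in> X n"
  obtains c where "c < n" "c \<notin> ones w" "ones w \<subseteq> {..<n}" "w = word n c (ones w)"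
proof -
  have len: "length w = n" and "card {i. i < n \<and> w ! i = Star} = 1"
    using assms by (simp_all add: X_def)
  then obtain c where "{i. i < n \<and> w ! i = Star} = {c}"
    by (meson card_1_singletonE)
  then have c: "c < n" "w ! c = Star" and star_unique: "\<And>i. i < n \<Longrightarrow> w ! i = Star \<Longrightarrow> i = c"
    by blast+
  have "w ! i = word n c (ones w) ! i" if "i < n" for i
    using c star_unique[OF that] that len by (cases "w ! i") (auto simp: nth_word ones_def)
  then have "w = word n c (ones w)"
    using len by (intro nth_equalityI) auto
  moreover have "c \<notin> ones w" "ones w \<subseteq> {..<n}"
    using c len by (auto simp: ones_def)
  ultimately show thesis using c(1) that by blast
qed

lemma word_eq_iff:
  assumes "c < n" "d < n" "c \<notin> Z" "d \<notin> Y" "Z \<subseteq> {..<n}" "Y \<subseteq> {..<n}"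
  shows "word n c Z = word n d Y \<longleftrightarrow> c = d \<and> Z = Y"
proof
  assume eq: "word n c Z = word n d Y"
  have "word n d Y ! c = Star"
    using arg_cong[OF eq, of "\<lambda>w. w ! c"] assms by (simp add: nth_word)
  then have cd: "c = d" using assms by (auto simp: nth_word split: if_splits)
  have "i \<in> Z \<longleftrightarrow> i \<in> Y" if "i < n" for i
    using arg_cong[OF eq, of "\<lambda>w. w ! i"] that cd assms by (auto simp: nth_word split: if_splits)
  then have "Z = Y" using assms by blast
  with cd show "c = d \<and> Z = Y" ..
qed simp

lemma hamming_word:
  assumes "c < n" "d < n" "c \<notin> Z" "d \<notin> Y" "Z \<subseteq> {..<n}" "Y \<subseteq> {..<n}"
  shows "hamming (word n c Z) (word n d Y) =
         card (if c = d then sym_diff Z Y else insert c (insert d (sym_diff Z Y)))"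
proof -
  have "{i. i < n \<and> word n c Z ! i \<noteq> word n d Y ! i} =
        (if c = d then sym_diff Z Y else insert c (insert d (sym_diff Z Y)))"
    using assms by (auto simp: nth_word split: if_splits)
  then show ?thesis by (simp add: hamming_def)
qed

lemma finite_X: "finite (X n)"
proof (rule finite_subset)
  show "X n \<subseteq> {w. set w \<subseteq> {Star, Zero, One} \<and> length w = n}"
    using sym.exhaust by (auto simp: X_def)
  show "finite {w. set w \<subseteq> {Star, Zero, One} \<and> length w = n}"
    by (rule finite_lists_length_eq) simp
qed

lemma hamming_commute: "length u = length v \<Longrightarrow> hamming u v = hamming v u"
  unfolding hamming_def by (metis)

lemma hamming_update_le:
  assumes "x \<noteq> v ! i \<Longrightarrow> u ! i \<noteq> v ! i"
  shows "hamming (u[i := x]) v \<le> hamming u v"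
  unfolding hamming_def
proof (rule card_mono)
  show "{j. j < length (u[i := x]) \<and> u[i := x] ! j \<noteq> v ! j} \<subseteq> {j. j < length u \<and> u ! j \<noteq> v ! j}"
    using assms by auto (metis nth_list_update_eq nth_list_update_neq)
qed simp

lemma hamming_update_both_le:
  assumes "length u = length v"
  shows "hamming (u[i := x]) (v[i := x]) \<le> hamming u v"
  unfolding hamming_def
proof (rule card_mono)
  show "{j. j < length (u[i := x]) \<and> u[i := x] ! j \<noteq> v[i := x] ! j} \<subseteq> {j. j < length u \<and> u ! j \<noteq> v ! j}"
    using assms by auto (metis nth_list_update_eq nth_list_update_neq)
qed simp

lemma hamming_update_swap:
  assumes "length u = length v" "x \<noteq> y"
  shows "hamming (u[i := x]) (v[i := y]) = hamming (u[i := y]) (v[i := x])"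
  unfolding hamming_def
proof (rule arg_cong[where f = card])
  show "{j. j < length (u[i := x]) \<and> u[i := x] ! j \<noteq> v[i := y] ! j} =
        {j. j < length (u[i := y]) \<and> u[i := y] ! j \<noteq> v[i := x] ! j}"
    using assms by auto (metis nth_list_update_eq nth_list_update_neq)+
qed

section \<open>Compression\<close>

definition down_closed :: "nat \<Rightarrow> sym list set \<Rightarrow> bool" where
  "down_closed n C \<longleftrightarrow> (\<forall>w\<in>C. \<forall>i<n. w ! i = One \<longrightarrow> w[i := Zero] \<in> C)"

definition shift :: "nat \<Rightarrow> sym list set \<Rightarrow> sym list \<Rightarrow> sym list" where
  "shift i B w = (if w ! i = One \<and> w[i := Zero] \<notin> B then w[i := Zero] else w)"

lemma shift_in_X:
  assumes "w \<in> X n" "i < n"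
  shows "shift i B w \<in> X n"
proof -
  have "{j. j < n \<and> w[i := Zero] ! j = Star} = {j. j < n \<and> w ! j = Star}" if "w ! i = One"
    using that assms by (auto simp: X_def nth_list_update)
  then show ?thesis using assms by (auto simp: shift_def X_def)
qed

lemma inj_on_shift: "inj_on (shift i B) B"
proof (rule inj_onI)
  fix u v assume u: "u \<in> B" and v: "v \<in> B" and eq: "shift i B u = shift i B v"
  show "u = v"
  proof (cases "u ! i = One \<and> u[i := Zero] \<notin> B"; cases "v ! i = One \<and> v[i := Zero] \<notin> B")
    assume "u ! i = One \<and> u[i := Zero] \<notin> B" and "v ! i = One \<and> v[i := Zero] \<notin> B"
    then have "(u[i := Zero])[i := One] = (v[i := Zero])[i := One]"
      using eq by (simp add: shift_def)
    then show "u = v" using \<open>u ! i = One \<and> _\<close> \<open>v ! i = One \<and> _\<close>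
      by (metis list_update_id list_update_overwrite)
  qed (use eq u v in \<open>auto simp: shift_def split: if_splits\<close>)
qed

lemma hamming_shift_moved_le:
  assumes len: "\<forall>w\<in>B. length w = n" and diam: "\<forall>u\<in>B. \<forall>v\<in>B. hamming u v \<le> d"
    and u: "u \<in> B" "u ! i = One" "u[i := Zero] \<notin> B" and v: "v \<in> B"
  shows "hamming (u[i := Zero]) (shift i B v) \<le> d"
proof (cases "v ! i = One")
  case True
  have "length u = length v" using len u v by simp
  show ?thesis
  proof (cases "v[i := Zero] \<in> B")
    case True
    \<comment> \<open>v keeps its one, so compare with its shift v[i := Zero], which lies in B\<close>
    have "hamming (u[i := Zero]) v = hamming (u[i := Zero]) (v[i := One])"
      using \<open>v ! i = One\<close> by (metis list_update_id)
    also have "\<dots> = hamming (u[i := One]) (v[i := Zero])"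
      using \<open>length u = length v\<close> by (simp add: hamming_update_swap)
    also have "\<dots> = hamming u (v[i := Zero])" using u by (metis list_update_id)
    also have "\<dots> \<le> d" using diam u True by blast
    finally show ?thesis using True by (simp add: shift_def)
  next
    case False
    have "hamming (u[i := Zero]) (v[i := Zero]) \<le> hamming u v"
      using \<open>length u = length v\<close> by (rule hamming_update_both_le)
    also have "\<dots> \<le> d" using diam u v by blast
    finally show ?thesis using \<open>v ! i = One\<close> False by (simp add: shift_def)
  qed
next
  case False
  have "hamming (u[i := Zero]) v \<le> hamming u v"
    using u False by (intro hamming_update_le) auto
  also have "\<dots> \<le> d" using diam u v by blast
  finally show ?thesis using False by (simp add: shift_def)
qed

lemma hamming_shift_le:
  assumes len: "\<forall>w\<in>B. length w = n" and diam: "\<forall>u\<in>B. \<forall>v\<in>B. hamming u v \<le> d"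
    and "u \<in> B" "v \<in> B"
  shows "hamming (shift i B u) (shift i B v) \<le> d"
proof -
  have moved: "hamming (shift i B u) (shift i B v) \<le> d"
    if "u \<in> B" "v \<in> B" "u ! i = One \<and> u[i := Zero] \<notin> B" for u v
    using hamming_shift_moved_le[OF len diam] that by (simp add: shift_def)
  show ?thesis
  proof (cases "u ! i = One \<and> u[i := Zero] \<notin> B \<or> v ! i = One \<and> v[i := Zero] \<notin> B")
    case True
    have "length (shift i B u) = length (shift i B v)"
      using len assms(3,4) by (simp add: shift_def)
    then show ?thesis using True moved[of u v] moved[of v u] assms(3,4) hamming_commute by metis
  next
    case False
    then show ?thesis using diam assms(3,4) by (simp add: shift_def)
  qed
qed

lemma card_ones_shift_le: "card (ones (shift i B w)) \<le> card (ones w)"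
proof -
  have "ones (w[i := Zero]) \<subseteq> ones w"
    unfolding ones_def by auto (metis nth_list_update_eq nth_list_update_neq sym.distinct(6))
  then show ?thesis by (simp add: shift_def card_mono)
qed

lemma card_ones_shift_less:
  assumes "i < length w" "w ! i = One" "w[i := Zero] \<notin> B"
  shows "card (ones (shift i B w)) < card (ones w)"
proof -
  have "ones (w[i := Zero]) = ones w - {i}" and "i \<in> ones w"
    using assms by (auto simp: ones_def nth_list_update split: if_splits)
  moreover have "card (ones w - {i}) < card (ones w)"
    using \<open>i \<in> ones w\<close> by (rule card_Diff1_less[OF finite_ones])
  ultimately show ?thesis using assms by (simp add: shift_def)
qed

lemma obtain_down_closed:
  assumes "B \<subseteq> X n" "\<forall>u\<in>B. \<forall>v\<in>B. hamming u v \<le> d"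
  obtains C where "C \<subseteq> X n" "card C = card B" "\<forall>u\<in>C. \<forall>v\<in>C. hamming u v \<le> d"
    "down_closed n C"
proof -
  define P where "P C \<longleftrightarrow> C \<subseteq> X n \<and> card C = card B \<and> (\<forall>u\<in>C. \<forall>v\<in>C. hamming u v \<le> d)" for C
  define weight where "weight C = (\<Sum>w\<in>C. card (ones w))" for C
  \<comment> \<open>an anticode of least weight is down-closed, since a shift would lower the weight\<close>
  obtain C where PC: "P C" and least: "\<And>C'. P C' \<Longrightarrow> weight C \<le> weight C'"
    using ex_has_least_nat[of P B weight] assms by (auto simp: P_def)
  then have CX: "C \<subseteq> X n" and diam: "\<forall>u\<in>C. \<forall>v\<in>C. hamming u v \<le> d"
    by (auto simp: P_def)
  have len: "\<forall>w\<in>C. length w = n" using CX by (auto simp: X_def)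
  have "down_closed n C"
    unfolding down_closed_def
  proof (rule ccontr)
    assume "\<not> (\<forall>w\<in>C. \<forall>i<n. w ! i = One \<longrightarrow> w[i := Zero] \<in> C)"
    then obtain w i where w: "w \<in> C" "i < n" "w ! i = One" "w[i := Zero] \<notin> C" by blast
    have inj: "inj_on (shift i C) C" by (rule inj_on_shift)
    have "P (shift i C ` C)"
      using PC CX shift_in_X[OF _ w(2)] card_image[OF inj] hamming_shift_le[OF len diam]
      by (auto simp: P_def)
    then have "weight C \<le> weight (shift i C ` C)" by (rule least)
    also have "\<dots> = (\<Sum>u\<in>C. card (ones (shift i C u)))"
      unfolding weight_def by (rule sum.reindex_cong[OF inj refl refl])
    also have "\<dots> < weight C"
      unfolding weight_def
    proof (rule sum_strict_mono_ex1)
      show "finite C" using CX finite_X finite_subset by blast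
      show "\<forall>u\<in>C. card (ones (shift i C u)) \<le> card (ones u)" by (simp add: card_ones_shift_le)
      show "\<exists>u\<in>C. card (ones (shift i C u)) < card (ones u)"
        using w len card_ones_shift_less[of i w C] by auto
    qed
    finally show False by simp
  qed
  then show thesis using that CX PC diam by (auto simp: P_def)
qed

lemma word_Diff_in_down_closed:
  assumes "down_closed n C" "word n c Z \<in> C"
  shows "word n c (Z - {i}) \<in> C"
proof (cases "i < n \<and> i \<noteq> c \<and> i \<in> Z")
  case True
  then have "(word n c Z)[i := Zero] = word n c (Z - {i})"
    by (intro nth_equalityI) (auto simp: nth_word nth_list_update)
  moreover have "word n c Z ! i = One" using True by (simp add: nth_word)
  ultimately show ?thesis using assms True by (metis down_closed_def)
next
  case False
  then have "word n c (Z - {i}) = word n c Z" by (auto simp: word_def)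
  then show ?thesis using assms(2) by simp
qed

lemma word_subset_in_down_closed:
  assumes "down_closed n C" "word n c Z \<in> C" "Y \<subseteq> Z" "finite Z"
  shows "word n c Y \<in> C"
proof -
  have "word n c (Y \<union> D) \<in> C \<Longrightarrow> word n c Y \<in> C" if "finite D" for D
    using that
  proof (induction D rule: finite_induct)
    case (insert i D)
    have "Y \<union> D = (Y \<union> insert i D) - {i} \<or> Y \<union> D = Y \<union> insert i D"
      using insert.hyps by blast
    then show ?case using insert word_Diff_in_down_closed[OF assms(1)] by metis
  qed simp
  moreover have "Z = Y \<union> (Z - Y)" using assms(3) by blast
  ultimately show ?thesis using assms by (metis finite_Diff)
qed

section \<open>Anticodes containing a word with three ones\<close>

definition heavy_compatible :: "nat \<Rightarrow> nat \<Rightarrow> nat set \<Rightarrow> sym list set" where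
  "heavy_compatible n c0 Z0 =
     {word n c0 Y | Y. Y \<subseteq> {..<n} \<and> card (Y - Z0) \<le> 1} \<union>
     {word n c Y | c Y. c \<in> Z0 \<and> Y \<subseteq> insert c0 Z0 - {c}}"

lemma down_closed_subset_heavy_compatible:
  assumes CX: "C \<subseteq> X n" and diam: "\<forall>u\<in>C. \<forall>v\<in>C. hamming u v \<le> 4"
    and dc: "down_closed n C"
    and w0: "word n c0 Z0 \<in> C" "c0 < n" "c0 \<notin> Z0" "Z0 \<subseteq> {..<n}" "card Z0 = 3"
  shows "C \<subseteq> heavy_compatible n c0 Z0"
proof
  fix w assume w: "w \<in> C"
  obtain c where c: "c < n" "c \<notin> ones w" "ones w \<subseteq> {..<n}" "w = word n c (ones w)"
    using X_obtain_word CX w by blast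
  define Y where "Y = ones w"
  have Yn: "Y \<subseteq> {..<n}" and cY: "c \<notin> Y" and wY: "word n c Y \<in> C"
    using c w by (auto simp: Y_def)
  have finY: "finite Y" and finZ0: "finite Z0" using Yn w0 finite_subset by auto
  have "c = c0 \<and> card (Y - Z0) \<le> 1 \<or> c \<in> Z0 \<and> Y \<subseteq> insert c0 Z0"
  proof (cases "c = c0")
    case True
    have "word n c0 (Y - Z0) \<in> C"
      using word_subset_in_down_closed[OF dc] wY True finY by blast
    then have "hamming (word n c0 Z0) (word n c0 (Y - Z0)) \<le> 4" using diam w0 by blast
    moreover have "hamming (word n c0 Z0) (word n c0 (Y - Z0)) = card (Z0 \<union> (Y - Z0))"
      using hamming_word[of c0 n c0 Z0 "Y - Z0"] w0 Yn True cY by (simp add: subset_eq)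
    moreover have "card (Z0 \<union> (Y - Z0)) = 3 + card (Y - Z0)"
      using card_Un_disjoint[of Z0 "Y - Z0"] w0 finY finZ0 by auto
    ultimately show ?thesis using True by simp
  next
    case False
    have "word n c {} \<in> C"
      using word_subset_in_down_closed[OF dc] wY finY by blast
    then have "hamming (word n c0 Z0) (word n c {}) \<le> 4" using diam w0 by blast
    moreover have "hamming (word n c0 Z0) (word n c {}) = card (insert c (insert c0 Z0))"
      using hamming_word[of c0 n c Z0 "{}"] w0 c False by (simp add: insert_commute)
    moreover have "card (insert c0 Z0) = 4" using w0 finZ0 by simp
    ultimately have cZ0: "c \<in> Z0" using finZ0 False by (auto simp: card_insert_if split: if_splits)
    define Y' where "Y' = Y - insert c0 Z0"
    have "word n c Y' \<in> C"
      using word_subset_in_down_closed[OF dc] wY finY unfolding Y'_def by blast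
    then have "hamming (word n c0 Z0) (word n c Y') \<le> 4" using diam w0 by blast
    moreover have "hamming (word n c0 Z0) (word n c Y') = card (insert c0 Z0 \<union> Y')"
    proof -
      have "c \<notin> Y'" "Y' \<subseteq> {..<n}" using cY Yn by (auto simp: Y'_def)
      moreover have "insert c0 (insert c (sym_diff Z0 Y')) = insert c0 Z0 \<union> Y'"
        using cZ0 by (auto simp: Y'_def)
      ultimately show ?thesis using hamming_word[of c0 n c Z0 Y'] w0 c(1) False by simp
    qed
    moreover have "card (insert c0 Z0 \<union> Y') = 4 + card Y'"
      using card_Un_disjoint[of "insert c0 Z0" Y'] w0 finY finZ0 by (auto simp: Y'_def)
    ultimately have "Y' = {}" using finY by (simp add: Y'_def)
    then show ?thesis using cZ0 by (auto simp: Y'_def)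
  qed
  then show "w \<in> heavy_compatible n c0 Z0"
    using c Yn cY unfolding heavy_compatible_def Y_def by blast
qed

lemma card_heavy_compatible_le:
  assumes c0: "c0 < n" "c0 \<notin> Z0" and Z0: "Z0 \<subseteq> {..<n}" "card Z0 = 3" and n: "4 \<le> n"
  shows "card (heavy_compatible n c0 Z0) \<le> 8 * n"
proof -
  let ?F1 = "{word n c0 Y | Y. Y \<subseteq> {..<n} \<and> card (Y - Z0) \<le> 1}"
  let ?F2 = "{word n c Y | c Y. c \<in> Z0 \<and> Y \<subseteq> insert c0 Z0 - {c}}"
  have finZ0: "finite Z0" using Z0 finite_subset by blast
  define R where "R = {..<n} - insert c0 Z0"
  have finR: "finite R" by (simp add: R_def)
  have "card R = n - 4"
    using Z0 c0 finZ0 card_Diff_subset[of "insert c0 Z0" "{..<n}"] by (simp add: R_def)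
  have "?F1 \<subseteq> (\<lambda>(A, S). word n c0 (A \<union> S)) ` (Pow Z0 \<times> insert {} ((\<lambda>x. {x}) ` R))"
  proof clarify
    fix Y assume Y: "Y \<subseteq> {..<n}" "card (Y - Z0) \<le> 1"
    define S where "S = Y - {c0} - Z0"
    have finY: "finite Y" using Y(1) finite_subset by blast
    have "S \<subseteq> R" using Y by (auto simp: R_def S_def)
    moreover have "card S \<le> 1"
      using Y(2) finY card_mono[of "Y - Z0" S] by (fastforce simp: S_def)
    ultimately have "S \<in> insert {} ((\<lambda>x. {x}) ` R)"
      using finY by (auto simp: le_Suc_eq card_1_singleton_iff S_def)
    moreover have "word n c0 Y = word n c0 ((Y - {c0}) \<inter> Z0 \<union> S)"
      by (auto simp: word_def S_def)
    ultimately show "word n c0 Y \<in> (\<lambda>(A, S). word n c0 (A \<union> S)) ` (Pow Z0 \<times> insert {} ((\<lambda>x. {x}) ` R))"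
      by (intro image_eqI[where x = "((Y - {c0}) \<inter> Z0, S)"]) auto
  qed
  then have "card ?F1 \<le> card ((\<lambda>(A, S). word n c0 (A \<union> S)) ` (Pow Z0 \<times> insert {} ((\<lambda>x. {x}) ` R)))"
    by (rule card_mono[rotated]) (simp add: finZ0 finR)
  also have "\<dots> \<le> card (Pow Z0 \<times> insert {} ((\<lambda>x. {x}) ` R))"
    by (rule card_image_le) (simp add: finZ0 finR)
  also have "\<dots> = 8 * card (insert {} ((\<lambda>x. {x}) ` R))"
    using Z0 finZ0 by (simp add: card_cartesian_product card_Pow)
  also have "card (insert {} ((\<lambda>x. {x}) ` R)) \<le> Suc (card R)"
    using card_image_le[OF finR, of "\<lambda>x. {x}"] finR by (simp add: card_insert_if)
  finally have "card ?F1 \<le> 8 * (n - 3)" using \<open>card R = n - 4\<close> n by simp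
  moreover have "card ?F2 \<le> 24"
  proof -
    have F2_eq: "?F2 = (\<lambda>(c, Y). word n c Y) ` (SIGMA c:Z0. Pow (insert c0 Z0 - {c}))" by auto
    have "card ?F2 \<le> card (SIGMA c:Z0. Pow (insert c0 Z0 - {c}))"
      unfolding F2_eq by (rule card_image_le) (simp add: finZ0)
    also have "\<dots> = (\<Sum>c\<in>Z0. 8)"
      using c0 Z0 finZ0 by (intro trans[OF card_SigmaI] sum.cong) (auto simp: card_Pow)
    finally show ?thesis using Z0 by simp
  qed
  ultimately show ?thesis using card_Un_le[of ?F1 ?F2] n by (simp add: heavy_compatible_def)
qed

lemma card_down_closed_heavy_le:
  assumes CX: "C \<subseteq> X n" and diam: "\<forall>u\<in>C. \<forall>v\<in>C. hamming u v \<le> 4"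
    and dc: "down_closed n C" and w0: "w0 \<in> C" "3 \<le> card (ones w0)" and n: "4 \<le> n"
  shows "card C \<le> 8 * n"
proof -
  obtain c0 where c0: "c0 < n" "c0 \<notin> ones w0" "ones w0 \<subseteq> {..<n}" "w0 = word n c0 (ones w0)"
    using X_obtain_word CX w0 by blast
  obtain Z0 where Z0: "Z0 \<subseteq> ones w0" "card Z0 = 3"
    using obtain_subset_with_card_n[OF w0(2)] by blast
  then have Z0n: "Z0 \<subseteq> {..<n}" "c0 \<notin> Z0" using c0 by auto
  have "word n c0 Z0 \<in> C"
    using word_subset_in_down_closed[OF dc, of c0 "ones w0" Z0] c0 w0 Z0 by simp
  then have "C \<subseteq> heavy_compatible n c0 Z0"
    using down_closed_subset_heavy_compatible[OF CX diam dc] c0(1) Z0n Z0(2) by blast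
  moreover have "heavy_compatible n c0 Z0 \<subseteq> X n"
    using c0(1) Z0n by (auto simp: heavy_compatible_def intro!: word_in_X)
  ultimately have "card C \<le> card (heavy_compatible n c0 Z0)"
    by (intro card_mono) (auto intro: finite_subset[OF _ finite_X])
  also have "\<dots> \<le> 8 * n"
    using card_heavy_compatible_le[OF c0(1) Z0n(2,1) Z0(2) n] .
  finally show ?thesis .
qed

section \<open>Anticodes of words with one or two ones\<close>

lemma bij_betw_transpose_comp_permutes:
  fixes a b :: 'a
  defines "t \<equiv> Transposition.transpose a b"
  assumes a: "a \<in> S" and b: "b \<in> S"
  shows "bij_betw (\<lambda>q. t \<circ> q) {q. q permutes S - {a} \<and> map q as = map t bs}
           {p. p permutes S \<and> map p (a # as) = b # bs}"
proof (rule bij_betw_byWitness[where f' = "\<lambda>p. t \<circ> p"])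
  show "(\<lambda>q. t \<circ> q) ` {q. q permutes S - {a} \<and> map q as = map t bs}
          \<subseteq> {p. p permutes S \<and> map p (a # as) = b # bs}"
  proof (rule image_subsetI)
    fix q assume "q \<in> {q. q permutes S - {a} \<and> map q as = map t bs}"
    then have q: "q permutes S - {a}" "map q as = map t bs" by simp_all
    have "t \<circ> q permutes S"
      using permutes_subset[OF q(1)] a b unfolding t_def by (intro permutes_compose permutes_swap_id) auto
    moreover have "q a = a" using permutes_not_in[OF q(1)] by simp
    moreover have "map (t \<circ> q) as = bs"
      using arg_cong[OF q(2), of "map t"] by (simp add: comp_def t_def)
    ultimately show "t \<circ> q \<in> {p. p permutes S \<and> map p (a # as) = b # bs}" by (simp add: t_def)
  qed
  show "(\<lambda>p. t \<circ> p) ` {p. p permutes S \<and> map p (a # as) = b # bs}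
          \<subseteq> {q. q permutes S - {a} \<and> map q as = map t bs}"
  proof (rule image_subsetI)
    fix p assume "p \<in> {p. p permutes S \<and> map p (a # as) = b # bs}"
    then have p: "p permutes S" "p a = b" "map p as = bs" by simp_all
    have "t \<circ> p permutes S"
      using p(1) a b unfolding t_def by (intro permutes_compose permutes_swap_id)
    moreover have "(t \<circ> p) a = a" using p(2) by (simp add: t_def)
    ultimately have "t \<circ> p permutes S - {a}"
      by (auto simp: permutes_def)
    moreover have "map (t \<circ> p) as = map t bs" using p(3) by (simp flip: map_map)
    ultimately show "t \<circ> p \<in> {q. q permutes S - {a} \<and> map q as = map t bs}" by simp
  qed
qed (auto simp: comp_def t_def)

lemma card_permutes_map_eq:
  assumes "finite S" "distinct as" "distinct bs" "length as = length bs" "set as \<subseteq> S" "set bs \<subseteq> S"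
  shows "card {p. p permutes S \<and> map p as = bs} = fact (card S - length as)"
  using assms
proof (induction as arbitrary: bs S)
  case Nil
  then show ?case by (simp add: card_permutations)
next
  case (Cons a as)
  then obtain b bs' where bs: "bs = b # bs'" by (cases bs) auto
  let ?t = "Transposition.transpose a b"
  have a: "a \<in> S" and b: "b \<in> S" using Cons.prems bs by auto
  have "card {p. p permutes S \<and> map p (a # as) = bs}
      = card {q. q permutes S - {a} \<and> map q as = map ?t bs'}"
    unfolding bs using bij_betw_same_card[OF bij_betw_transpose_comp_permutes[OF a b]] by simp
  also have "\<dots> = fact (card (S - {a}) - length as)"
  proof (rule Cons.IH)
    show "set (map ?t bs') \<subseteq> S - {a}"
      using Cons.prems bs a b by (auto simp: transpose_def)
  qed (use Cons.prems bs in \<open>auto simp: distinct_map\<close>)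
  finally show ?case using a by simp
qed

text \<open>
  The configuration for n = 2k + 2 consists of the words j \<le> k: word 0 has its star at 0
  and its one at 1; word j \<ge> 1 has its ones on the pair {2j, 2j + 1} and its star on the
  first position of the cyclically next pair.  Two of these words could only be at
  distance 4 if each had its star inside the other's pair, which needs k \<le> 2.
\<close>

definition conf_star :: "nat \<Rightarrow> nat \<Rightarrow> nat" where
  "conf_star k j = (if j = 0 then 0 else 2 * (j mod k) + 2)"

definition conf_ones :: "nat \<Rightarrow> nat set" where
  "conf_ones j = (if j = 0 then {1} else {2 * j, 2 * j + 1})"

definition conf_word :: "nat \<Rightarrow> nat \<Rightarrow> (nat \<Rightarrow> nat) \<Rightarrow> nat \<Rightarrow> sym list" where
  "conf_word n k p j = word n (p (conf_star k j)) (p ` conf_ones j)"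

lemma conf_star_less: "j \<le> k \<Longrightarrow> 0 < k \<Longrightarrow> conf_star k j < 2 * k + 2"
  by (simp add: conf_star_def)

lemma conf_ones_less: "j \<le> k \<Longrightarrow> x \<in> conf_ones j \<Longrightarrow> x < 2 * k + 2"
  by (auto simp: conf_ones_def split: if_splits)

lemma conf_ones_disjoint: "j \<noteq> j' \<Longrightarrow> conf_ones j \<inter> conf_ones j' = {}"
  by (auto simp: conf_ones_def)

lemma conf_star_notin_conf_ones: "j \<le> k \<Longrightarrow> 2 \<le> k \<Longrightarrow> conf_star k j \<notin> conf_ones j"
  by (auto simp: conf_star_def conf_ones_def mod_if)

lemma inj_on_conf_star: "0 < k \<Longrightarrow> inj_on (conf_star k) {..k}"
  by (rule inj_onI) (auto simp: conf_star_def mod_if split: if_splits)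

lemma conf_star_not_crossing:
  assumes "j \<le> k" "j' \<le> k" "3 \<le> k"
  shows "\<not> (conf_star k j \<in> conf_ones j' \<and> conf_star k j' \<in> conf_ones j)"
  using assms by (auto simp: conf_star_def conf_ones_def mod_if split: if_splits)

lemma card_conf_support_ge_5:
  assumes j: "j \<le> k" "j' \<le> k" "j \<noteq> j'" and k: "3 \<le> k"
  shows "5 \<le> card (insert (conf_star k j) (insert (conf_star k j') (conf_ones j \<union> conf_ones j')))"
    (is "5 \<le> card (insert ?s (insert ?s' ?A))")
proof -
  have fin: "finite ?A" by (simp add: conf_ones_def)
  have card_A: "card ?A = card (conf_ones j) + card (conf_ones j')"
    using conf_ones_disjoint[OF j(3)] by (simp add: card_Un_disjoint conf_ones_def)
  show ?thesis
  proof (cases "j = 0 \<or> j' = 0")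
    case True
    then have "?s \<notin> insert ?s' ?A" "?s' \<notin> ?A" "card ?A = 3"
      using j k card_A by (auto simp: conf_star_def conf_ones_def mod_if)
    then show ?thesis using fin by simp
  next
    case False
    then have "card ?A = 4" using card_A by (simp add: conf_ones_def)
    have "?s \<notin> conf_ones j" "?s' \<notin> conf_ones j'"
      using conf_star_notin_conf_ones j k by auto
    moreover have "?s \<notin> conf_ones j' \<or> ?s' \<notin> conf_ones j"
      using conf_star_not_crossing[OF j(1,2) k] by blast
    ultimately obtain x where x: "x = ?s \<or> x = ?s'" "x \<notin> ?A" by blast
    then have "card (insert x ?A) = 5" using \<open>card ?A = 4\<close> fin by simp
    moreover have "card (insert x ?A) \<le> card (insert ?s (insert ?s' ?A))"
      using x fin by (intro card_mono) auto
    ultimately show ?thesis by simp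
  qed
qed

lemma hamming_conf_word_ge_5:
  assumes p: "p permutes {..<n}" and n: "n = 2 * k + 2" "3 \<le> k"
    and j: "j \<le> k" "j' \<le> k" "j \<noteq> j'"
  shows "5 \<le> hamming (conf_word n k p j) (conf_word n k p j')"
proof -
  let ?s = "conf_star k j" and ?s' = "conf_star k j'"
  have inj: "inj p" using permutes_inj[OF p] .
  have "?s < n" "?s' < n" "conf_ones j \<subseteq> {..<n}" "conf_ones j' \<subseteq> {..<n}"
    using conf_star_less conf_ones_less j n by auto
  then have in_range: "p ?s < n" "p ?s' < n" "p ` conf_ones j \<subseteq> {..<n}" "p ` conf_ones j' \<subseteq> {..<n}"
    using permutes_in_image[OF p] by auto
  have "p ?s \<notin> p ` conf_ones j" "p ?s' \<notin> p ` conf_ones j'"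
    using conf_star_notin_conf_ones j n inj by (auto simp: inj_image_mem_iff)
  moreover have "p ?s \<noteq> p ?s'"
    using inj_onD[OF inj_on_conf_star, of k j j'] j n inj by (auto simp: inj_eq)
  ultimately have "hamming (conf_word n k p j) (conf_word n k p j') =
      card (insert (p ?s) (insert (p ?s') (sym_diff (p ` conf_ones j) (p ` conf_ones j'))))"
    using hamming_word[OF in_range(1,2) _ _ in_range(3,4)] by (simp add: conf_word_def)
  also have "\<dots> = card (p ` insert ?s (insert ?s' (conf_ones j \<union> conf_ones j')))"
  proof -
    have "sym_diff (p ` conf_ones j) (p ` conf_ones j') = p ` (conf_ones j \<union> conf_ones j')"
      using conf_ones_disjoint[OF j(3)] inj by (auto dest: injD)
    then show ?thesis by simp
  qed
  also have "\<dots> = card (insert ?s (insert ?s' (conf_ones j \<union> conf_ones j')))"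
    by (rule card_image[OF inj_on_subset[OF inj subset_UNIV]])
  finally show ?thesis using card_conf_support_ge_5[OF j n(2)] by simp
qed

lemma card_mult_le_double_counting:
  assumes "finite S" "finite T"
    and "\<And>t. t \<in> T \<Longrightarrow> card {s \<in> S. R s t} \<le> 1"
    and "\<And>s. s \<in> S \<Longrightarrow> N \<le> card {t \<in> T. R s t}"
  shows "card S * N \<le> card T"
proof -
  have "card S * N \<le> (\<Sum>s\<in>S. card {t \<in> T. R s t})"
    using sum_mono[of S "\<lambda>_. N", OF assms(4)] by simp
  also have "\<dots> = (\<Sum>t\<in>T. card {s \<in> S. R s t})"
    by (rule sum_multicount_gen[OF assms(1,2)]) simp
  also have "\<dots> \<le> card T"
    using sum_mono[of T _ "\<lambda>_. 1", OF assms(3)] by simp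
  finally show ?thesis .
qed

lemma card_permutes_conf_word_single:
  assumes n: "n = 2 * k + 2" and "c < n" "x < n" "x \<noteq> c"
  shows "fact (n - 2) \<le> card {p. p permutes {..<n} \<and> (\<exists>j\<le>k. conf_word n k p j = word n c {x})}"
proof -
  have "fact (n - 2) = card {p. p permutes {..<n} \<and> map p [0, 1] = [c, x]}"
    using assms by (subst card_permutes_map_eq) auto
  also have "\<dots> \<le> card {p. p permutes {..<n} \<and> (\<exists>j\<le>k. conf_word n k p j = word n c {x})}"
    by (intro card_mono)
       (auto simp: finite_permutations conf_word_def conf_star_def conf_ones_def intro!: exI[of _ 0])
  finally show ?thesis .
qed

lemma card_permutes_conf_pair:
  assumes n: "n = 2 * k + 2" "2 \<le> k" and j: "j \<in> {1..k}"
    and "c < n" "u < n" "v < n" "u \<noteq> v" "c \<noteq> u" "c \<noteq> v"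
  shows "card {p. p permutes {..<n} \<and> p (conf_star k j) = c \<and> p ` conf_ones j = {u, v}}
           = 2 * fact (n - 3)"
proof -
  let ?ps = "[conf_star k j, 2 * j, 2 * j + 1]"
  have "conf_star k j \<notin> conf_ones j" "conf_star k j < n"
    using conf_star_notin_conf_ones conf_star_less j n by auto
  then have "distinct ?ps" "set ?ps \<subseteq> {..<n}"
    using j n by (auto simp: conf_ones_def)
  then have card_fixed: "card {p. p permutes {..<n} \<and> map p ?ps = [c, x, y]} = fact (n - 3)"
    if "{x, y} = {u, v}" for x y
    using card_permutes_map_eq[of "{..<n}" ?ps "[c, x, y]"] that assms
    by (auto simp: doubleton_eq_iff)
  have "{p. p permutes {..<n} \<and> p (conf_star k j) = c \<and> p ` conf_ones j = {u, v}}
      = {p. p permutes {..<n} \<and> map p ?ps = [c, u, v]} \<union>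
        {p. p permutes {..<n} \<and> map p ?ps = [c, v, u]}"
    using j \<open>u \<noteq> v\<close> by (auto simp: conf_ones_def doubleton_eq_iff)
  also have "card \<dots> = 2 * fact (n - 3)"
    using card_fixed[of u v] card_fixed[of v u] \<open>u \<noteq> v\<close>
    by (subst card_Un_disjoint) (auto simp: finite_permutations insert_commute)
  finally show ?thesis .
qed

lemma card_permutes_conf_word_pair:
  assumes n: "n = 2 * k + 2" "2 \<le> k" and "c < n" "u < n" "v < n" "u \<noteq> v" "c \<noteq> u" "c \<noteq> v"
  shows "fact (n - 2) \<le> card {p. p permutes {..<n} \<and> (\<exists>j\<le>k. conf_word n k p j = word n c {u, v})}"
proof -
  define A where "A j = {p. p permutes {..<n} \<and> p (conf_star k j) = c \<and> p ` conf_ones j = {u, v}}" for j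
  have "A j \<inter> A j' = {}" if "j \<in> {1..k}" "j' \<in> {1..k}" "j \<noteq> j'" for j j'
  proof -
    have "conf_star k j \<noteq> conf_star k j'" using inj_on_conf_star[of k] that n by (auto dest: inj_onD)
    then show ?thesis unfolding A_def by (auto dest!: permutes_inj simp: inj_eq)
  qed
  then have "card (\<Union>j\<in>{1..k}. A j) = (\<Sum>j\<in>{1..k}. card (A j))"
    by (intro card_UN_disjoint) (auto simp: A_def finite_permutations)
  also have "\<dots> = k * (2 * fact (n - 3))"
    using card_permutes_conf_pair[OF n] assms by (simp add: A_def)
  also have "\<dots> = fact (n - 2)"
    using fact_Suc[of "n - 3", where 'a = nat] n by (simp add: Suc_diff_Suc numeral_eq_Suc algebra_simps)
  finally have "fact (n - 2) = card (\<Union>j\<in>{1..k}. A j)" ..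
  also have "\<dots> \<le> card {p. p permutes {..<n} \<and> (\<exists>j\<le>k. conf_word n k p j = word n c {u, v})}"
    by (intro card_mono) (auto simp: A_def conf_word_def finite_permutations)
  finally show ?thesis .
qed

lemma card_light_le:
  assumes n: "n = 2 * k + 2" "3 \<le> k"
    and CX: "C \<subseteq> X n" and diam: "\<forall>u\<in>C. \<forall>v\<in>C. hamming u v \<le> 4"
    and light: "\<forall>w\<in>C. card (ones w) = 1 \<or> card (ones w) = 2"
  shows "card C \<le> n * (n - 1)"
proof -
  let ?P = "{p. p permutes {..<n}}"
  let ?R = "\<lambda>w p. \<exists>j\<le>k. conf_word n k p j = w"
  have "card C * fact (n - 2) \<le> card ?P"
  proof (rule card_mult_le_double_counting)
    show "finite C" using CX finite_X finite_subset by blast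
    show "finite ?P" by (simp add: finite_permutations)
    show "card {w \<in> C. ?R w p} \<le> 1" if "p \<in> ?P" for p
    proof -
      have "hamming (conf_word n k p j) (conf_word n k p j') \<le> 4 \<Longrightarrow> j = j'"
        if "j \<le> k" "j' \<le> k" for j j'
        using hamming_conf_word_ge_5[of p n k j j'] \<open>p \<in> ?P\<close> n that by force
      then show ?thesis using diam by (auto simp: card_le_Suc0_iff_eq)
    qed
    show "fact (n - 2) \<le> card {p \<in> ?P. ?R w p}" if "w \<in> C" for w
    proof -
      obtain c where c: "c < n" "c \<notin> ones w" "ones w \<subseteq> {..<n}" "w = word n c (ones w)"
        using X_obtain_word CX \<open>w \<in> C\<close> by blast
      consider x where "ones w = {x}" | u v where "ones w = {u, v}" "u \<noteq> v"
        using light \<open>w \<in> C\<close> by (metis card_1_singletonE card_2_iff)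
      then show ?thesis
      proof cases
        case 1
        then show ?thesis
          using card_permutes_conf_word_single[OF n(1) c(1), of x] c by auto
      next
        case 2
        then show ?thesis
          using card_permutes_conf_word_pair[OF n(1) _ c(1), of u v] n(2) c by auto
      qed
    qed
  qed
  also have "card ?P = n * (n - 1) * fact (n - 2)"
    using n fact_Suc[of "n - 1", where 'a = nat] fact_Suc[of "n - 2", where 'a = nat]
    by (simp add: card_permutations numeral_eq_Suc algebra_simps)
  finally show ?thesis by simp
qed

lemma card_at_most_two_ones_le:
  assumes n: "n = 2 * k + 2" "3 \<le> k"
    and CX: "C \<subseteq> X n" and diam: "\<forall>u\<in>C. \<forall>v\<in>C. hamming u v \<le> 4"
    and at_most_two: "\<forall>w\<in>C. card (ones w) \<le> 2"
  shows "card C \<le> n ^ 2"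
proof -
  let ?C0 = "{w \<in> C. ones w = {}}" and ?C1 = "{w \<in> C. ones w \<noteq> {}}"
  have "?C0 \<subseteq> (\<lambda>c. word n c {}) ` {..<n}"
  proof
    fix w assume "w \<in> ?C0"
    then obtain c where "c < n" "w = word n c (ones w)" "ones w = {}"
      using CX X_obtain_word by blast
    then show "w \<in> (\<lambda>c. word n c {}) ` {..<n}" by auto
  qed
  then have "card ?C0 \<le> card ((\<lambda>c. word n c {}) ` {..<n})"
    by (intro card_mono) simp_all
  also have "\<dots> \<le> n"
    using card_image_le[of "{..<n}" "\<lambda>c. word n c {}"] by simp
  finally have "card ?C0 \<le> n" .
  moreover have "card ?C1 \<le> n * (n - 1)"
  proof (rule card_light_le[OF n])
    show "\<forall>w\<in>?C1. card (ones w) = 1 \<or> card (ones w) = 2"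
      using at_most_two by (auto simp: le_Suc_eq numeral_eq_Suc)
  qed (use CX diam in auto)
  moreover have "card C \<le> card ?C0 + card ?C1"
  proof -
    have "?C0 \<union> ?C1 = C" by blast
    then show ?thesis using card_Un_le[of ?C0 ?C1] by argo
  qed
  ultimately show ?thesis using n by (simp add: power2_eq_square algebra_simps)
qed

theorem card_le_square_if_hamming_le_4:
  assumes n: "n = 2 * k + 2" "3 \<le> k"
    and "B \<subseteq> X n" "\<forall>u\<in>B. \<forall>v\<in>B. hamming u v \<le> 4"
  shows "card B \<le> n ^ 2"
proof -
  obtain C where C: "C \<subseteq> X n" "card C = card B" "\<forall>u\<in>C. \<forall>v\<in>C. hamming u v \<le> 4" "down_closed n C"
    using obtain_down_closed assms(3,4) by blast
  show ?thesis
  proof (cases "\<forall>w\<in>C. card (ones w) \<le> 2")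
    case True
    then show ?thesis using card_at_most_two_ones_le[OF n C(1,3)] C(2) by simp
  next
    case False
    then obtain w where "w \<in> C" "3 \<le> card (ones w)" by force
    then have "card C \<le> 8 * n" using card_down_closed_heavy_le[OF C(1,3,4)] n by simp
    also have "\<dots> \<le> n ^ 2" using mult_le_mono1[of 8 n n] n by (simp add: power2_eq_square)
    finally show ?thesis using C(2) by simp
  qed
qed

section \<open>The extremal family\<close>

lemma diam_eqI:
  assumes "\<forall>u\<in>B. \<forall>v\<in>B. hamming u v \<le> d" "u \<in> B" "v \<in> B" "hamming u v = d"
  shows "diam B = d"
  unfolding diam_def
proof (rule Max_eqI)
  show "finite {hamming u v |u v. u \<in> B \<and> v \<in> B}"
    by (rule finite_subset[of _ "{..d}"]) (use assms(1) in auto)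
qed (use assms in auto)

lemma card_subsets_card_le_1:
  assumes "finite S"
  shows "card {Z. Z \<subseteq> S \<and> card Z \<le> 1} = card S + 1"
proof -
  have fin: "finite {Z. Z \<subseteq> S \<and> card Z = j}" for j
    by (rule finite_subset[of _ "Pow S"]) (use assms in auto)
  have "{Z. Z \<subseteq> S \<and> card Z \<le> 1} = {Z. Z \<subseteq> S \<and> card Z = 0} \<union> {Z. Z \<subseteq> S \<and> card Z = 1}"
    by auto
  then have "card {Z. Z \<subseteq> S \<and> card Z \<le> 1} = card {Z. Z \<subseteq> S \<and> card Z = 0} + card {Z. Z \<subseteq> S \<and> card Z = 1}"
    using fin by (simp add: card_Un_disjoint disjoint_iff)
  also have "\<dots> = (card S choose 0) + (card S choose 1)"
    using n_subsets[OF assms] by (simp add: conj_commute)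
  finally show ?thesis by simp
qed

definition light_words :: "nat \<Rightarrow> sym list set" where
  "light_words n = {word n c Z | c Z. c < n \<and> Z \<subseteq> {..<n} - {c} \<and> card Z \<le> 1}"

lemma word_in_light_words:
  "c < n \<Longrightarrow> Z \<subseteq> {..<n} - {c} \<Longrightarrow> card Z \<le> 1 \<Longrightarrow> word n c Z \<in> light_words n"
  by (auto simp: light_words_def)

lemma light_words_subset_X: "light_words n \<subseteq> X n"
  by (auto simp: light_words_def word_in_X)

lemma card_light_words: "card (light_words n) = n ^ 2"
proof -
  let ?P = "SIGMA c:{..<n}. {Z. Z \<subseteq> {..<n} - {c} \<and> card Z \<le> 1}"
  have "card ?P = (\<Sum>c<n. card {Z. Z \<subseteq> {..<n} - {c} \<and> card Z \<le> 1})"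
    by (rule card_SigmaI) simp_all
  also have "\<dots> = (\<Sum>c<n. n)"
    by (rule sum.cong) (simp_all only: card_subsets_card_le_1 finite_Diff finite_lessThan, simp)
  finally have card_P: "card ?P = n * n" by simp
  have "light_words n = (\<lambda>(c, Z). word n c Z) ` ?P"
    by (auto simp: light_words_def)
  moreover have "inj_on (\<lambda>(c, Z). word n c Z) ?P"
    by (rule inj_onI) (clarsimp simp: subset_Diff_insert word_eq_iff)
  ultimately show ?thesis using card_P by (simp add: card_image power2_eq_square)
qed

lemma hamming_light_words_le_4:
  assumes "u \<in> light_words n" "v \<in> light_words n"
  shows "hamming u v \<le> 4"
proof -
  obtain c Z d Y where u: "u = word n c Z" "c < n" "Z \<subseteq> {..<n} - {c}" "card Z \<le> 1"
    and v: "v = word n d Y" "d < n" "Y \<subseteq> {..<n} - {d}" "card Y \<le> 1"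
    using assms by (auto simp: light_words_def)
  have fin: "finite Z" "finite Y" using u v finite_subset by blast+
  have "hamming u v = card (if c = d then sym_diff Z Y else insert c (insert d (sym_diff Z Y)))"
    using hamming_word[of c n d Z Y] u v by (simp add: subset_Diff_insert)
  also have "\<dots> \<le> card (insert c (insert d (Z \<union> Y)))"
    by (rule card_mono) (use fin in auto)
  also have "\<dots> \<le> card (Z \<union> Y) + 2"
    using fin by (simp add: card_insert_if)
  also have "\<dots> \<le> card Z + card Y + 2"
    using card_Un_le[of Z Y] by simp
  finally show ?thesis using u v by simp
qed

lemma diam_light_words:
  assumes "4 \<le> n"
  shows "diam (light_words n) = 4"
proof (rule diam_eqI)
  show "word n 0 {1} \<in> light_words n" "word n 2 {3} \<in> light_words n"
    using assms by (auto intro!: word_in_light_words)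
  show "hamming (word n 0 {1}) (word n 2 {3}) = 4"
    using assms by (simp add: hamming_word)
qed (use hamming_light_words_le_4 in blast)

theorem proposition1:
  fixes m n :: nat
  assumes "n = 2 ^ m" and "n \<ge> 8"
  shows "(\<forall>B. B \<subseteq> X n \<and> (\<forall>u\<in>B. \<forall>v\<in>B. hamming u v \<le> 4) \<longrightarrow> card B \<le> n ^ 2)
       \<and> (\<exists>B. B \<subseteq> X n \<and> diam B = 4 \<and> card B = n ^ 2)"
proof
  have "even n" using assms by (cases m) auto
  then obtain j where "n = 2 * j" by (rule evenE)
  then have k: "n = 2 * (j - 1) + 2" "3 \<le> j - 1" using assms(2) by auto
  show "\<forall>B. B \<subseteq> X n \<and> (\<forall>u\<in>B. \<forall>v\<in>B. hamming u v \<le> 4) \<longrightarrow> card B \<le> n ^ 2"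
    using card_le_square_if_hamming_le_4[OF k] by blast
  show "\<exists>B. B \<subseteq> X n \<and> diam B = 4 \<and> card B = n ^ 2"
  proof (intro exI conjI)
    show "light_words n \<subseteq> X n" by (rule light_words_subset_X)
    show "diam (light_words n) = 4" using assms(2) by (intro diam_light_words) simp
    show "card (light_words n) = n ^ 2" by (rule card_light_words)
  qed
qed

end
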